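(* Let $q$ be a power of $2$ and $n\ge1$ an integer with $\gcd(n+1,q(q^2-1))=1$. Then $C_n(a)$ is LCD for every $a\in\mathbb{F}_q$.
   Context: For $a\in\mathbb{F}_q$ and $n \ge 1$, $T_n(a)$ denotes the $n\times n$ symmetric tridiagonal Toeplitz matrix over $\mathbb{F}_q$ with all diagonal entries equal to $a$, all entries on the first super- and sub-diagonals equal to $1$, and all other entries $0$. $C_n(a)$ is the $[2n,n]$ linear code over $\mathbb{F}_q$ with generator matrix $[I_n \mid T_n(a)]$. A linear code $C$ is LCD if $C\cap C^\perp=\{0\}$ (Euclidean dual). *)

theory Defs
  imports Main
begin

text \<open>Vectors of length m over a field are modelled as functions nat \<Rightarrow> 'a
  vanishing outside the index set {0..<m}; matrices as functions nat \<Rightarrow> nat \<Rightarrow> 'a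
  (entries outside the index range are irrelevant).\<close>

definition vecs :: "nat \<Rightarrow> (nat \<Rightarrow> 'a::zero) set" where
  "vecs m = {v. \<forall>j\<ge>m. v j = 0}"

definition tridiag_toeplitz :: "nat \<Rightarrow> 'a::comm_ring_1 \<Rightarrow> nat \<Rightarrow> nat \<Rightarrow> 'a" where
  "tridiag_toeplitz n a i j =
     (if i < n \<and> j < n then
        (if i = j then a else if i = j + 1 \<or> j = i + 1 then 1 else 0)
      else 0)"

definition gen_matrix :: "nat \<Rightarrow> 'a::comm_ring_1 \<Rightarrow> nat \<Rightarrow> nat \<Rightarrow> 'a" where
  "gen_matrix n a i j =
     (if j < n then (if i = j then 1 else 0) else tridiag_toeplitz n a i (j - n))"

definition lin_code :: "nat \<Rightarrow> nat \<Rightarrow> (nat \<Rightarrow> nat \<Rightarrow> 'a::comm_ring_1) \<Rightarrow> (nat \<Rightarrow> 'a) set" where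
  "lin_code k m G = {(\<lambda>j. if j < m then (\<Sum>i<k. u i * G i j) else 0) | u. u \<in> vecs k}"

definition C_code :: "nat \<Rightarrow> 'a::comm_ring_1 \<Rightarrow> (nat \<Rightarrow> 'a) set" where
  "C_code n a = lin_code n (2 * n) (gen_matrix n a)"

definition dual_code :: "nat \<Rightarrow> (nat \<Rightarrow> 'a::comm_ring_1) set \<Rightarrow> (nat \<Rightarrow> 'a) set" where
  "dual_code m C = {v \<in> vecs m. \<forall>c\<in>C. (\<Sum>j<m. c j * v j) = 0}"

definition is_LCD :: "nat \<Rightarrow> (nat \<Rightarrow> 'a::comm_ring_1) set \<Rightarrow> bool" where
  "is_LCD m C \<longleftrightarrow> C \<inter> dual_code m C = {\<lambda>_. 0}"

end

(*
  A codeword of C_n(a) has the form (u, T u) with T = T_n(a), and since T is symmetric it is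
  orthogonal to all of C_n(a) iff (I + T^2) u = 0.  In characteristic 2, I + T^2 = T_n(a+1)^2, and
  T_n(b) is nonsingular as soon as its determinant, the continuant K_n(b), is nonzero.  If K_n(b) = 0,
  then X^(n+1) = 1 modulo p = X^2 + bX + 1; on the other hand X^(q(q^2-1)) = 1 modulo p, because
  the Frobenius image X^q is congruent to a constant, to X or to X^(-1).  As gcd(n+1, q(q^2-1)) = 1
  this forces X = 1 modulo p, which is absurd for degree reasons.
*)

theory Submission
  imports Defs "HOL-Library.Cardinality" "HOL-Number_Theory.Residues" "HOL-Computational_Algebra.Polynomial"
begin

lemma CHAR_eq_2_if_card_power_of_2:
  assumes "CARD('a::{finite,field}) = 2 ^ k"
  shows "CHAR('a) = 2"
proof -
  have "prime CHAR('a)"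
    by (intro prime_CHAR_semidom finite_imp_CHAR_pos) simp
  moreover have "CHAR('a) dvd 2 ^ k"
    using CHAR_dvd_CARD[where 'a = 'a] assms by simp
  ultimately show ?thesis
    using prime_dvd_power_nat primes_dvd_imp_eq two_is_prime_nat by blast
qed

lemma two_eq_zero_if_CHAR_2:
  assumes "CHAR('a::semiring_1) = 2"
  shows "(2::'a) = 0"
  using of_nat_CHAR[where 'a = 'a] assms by simp

lemma field_power_card:
  fixes x :: "'a::{finite,field}"
  shows "x ^ CARD('a) = x"
proof (cases "x = 0")
  case False
  define U where "U = UNIV - {0 :: 'a}"
  have "bij_betw ((*) x) U U"
    using False by (intro bij_betwI[where g = "\<lambda>y. y / x"]) (auto simp: U_def)
  hence "(\<Prod>y\<in>U. x * y) = \<Prod>U"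
    by (rule prod.reindex_bij_betw)
  hence "x ^ card U * \<Prod>U = 1 * \<Prod>U"
    by (simp add: prod.distrib)
  moreover have "\<Prod>U \<noteq> 0"
    by (simp add: U_def)
  ultimately have "x ^ card U = 1"
    by simp
  moreover have "CARD('a) = Suc (card U)"
    using finite_UNIV_card_ge_0[where 'a = 'a] by (simp add: U_def card_Diff_singleton)
  ultimately show ?thesis
    by simp
qed (simp add: finite_UNIV_card_ge_0)

lemma cong_pow_eq_one_dvd:
  fixes x :: "'a::unique_euclidean_semiring"
  assumes "[x ^ m = 1] (mod p)" and "m dvd l"
  shows "[x ^ l = 1] (mod p)"
proof -
  obtain j where "l = m * j"
    using assms(2) by blast
  thus ?thesis
    using cong_pow[OF assms(1), of j] by (simp add: power_mult)
qed

lemma cong_pow_add_cancel: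
  fixes x :: "'a::unique_euclidean_semiring"
  assumes inv: "[x * y = 1] (mod p)" and "[x ^ (m + k) = x ^ k] (mod p)"
  shows "[x ^ m = 1] (mod p)"
proof -
  have "[x ^ m = x ^ m * (x * y) ^ k] (mod p)"
    using cong_mult[OF cong_refl cong_pow[OF inv, of k], of "x ^ m"] by (simp add: cong_sym)
  also have "x ^ m * (x * y) ^ k = x ^ (m + k) * y ^ k"
    by (simp add: power_add power_mult_distrib mult_ac)
  also have "[x ^ (m + k) * y ^ k = x ^ k * y ^ k] (mod p)"
    using assms(2) by (rule cong_mult[OF _ cong_refl])
  also have "x ^ k * y ^ k = (x * y) ^ k"
    by (simp add: power_mult_distrib)
  also have "[(x * y) ^ k = 1] (mod p)"
    using cong_pow[OF inv, of k] by simp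
  finally show ?thesis .
qed

lemma cong_one_if_coprime_exponents:
  fixes x :: "'a::unique_euclidean_semiring"
  assumes "[x ^ m = 1] (mod p)" and "[x ^ l = 1] (mod p)" and "coprime m l"
  shows "[x = 1] (mod p)"
proof (cases "m = 0")
  case True
  with assms show ?thesis by simp
next
  case False
  then obtain u v where "m * u = l * v + 1"
    using bezout_nat[of m l] assms(3) by auto
  have "[x = (x ^ l) ^ v * x] (mod p)"
    using cong_scalar_right[OF cong_pow[OF assms(2), of v], of x] by (simp add: cong_sym)
  also have "(x ^ l) ^ v * x = (x ^ m) ^ u"
    using \<open>m * u = l * v + 1\<close> by (simp add: mult.commute flip: power_mult power_Suc2)
  also have "[(x ^ m) ^ u = 1] (mod p)"
    using cong_pow[OF assms(1), of u] by simp
  finally show ?thesis .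
qed

section \<open>The order of \<open>X\<close> modulo \<open>X\<^sup>2 + b X + 1\<close>\<close>

lemma X_times_inverse_mod_quadratic:
  fixes b :: "'a::field"
  assumes "CHAR('a) = 2"
  shows "[[:0, 1:] * [:b, 1:] = 1] (mod [:1, b, 1:])"
proof -
  have "[:0, 1:] * [:b, 1:] - 1 = [:1, b, 1::'a:]"
    using uminus_CHAR_2[OF assms, of 1] by (simp add: one_pCons)
  thus ?thesis
    by (simp add: cong_iff_dvd_diff)
qed

lemma quadratic_dvd_linear_iff:
  fixes c b u v :: "'a::field"
  shows "[:c, b, 1:] dvd [:u, v:] \<longleftrightarrow> u = 0 \<and> v = 0"
proof
  assume dvd: "[:c, b, 1:] dvd [:u, v:]"
  show "u = 0 \<and> v = 0"
  proof (rule ccontr)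
    assume "\<not> (u = 0 \<and> v = 0)"
    hence "degree [:c, b, 1:] \<le> degree [:u, v:]"
      using dvd by (intro dvd_imp_degree_le) auto
    moreover have "degree [:u, v:] \<le> 1"
      using degree_pCons_le[of u "[:v:]"] by simp
    ultimately show False
      by simp
  qed
qed simp

lemma X_pow_card_root_mod_quadratic:
  fixes b :: "'a::{finite,field}"
  assumes "CARD('a) = 2 ^ k"
  shows "[([:0, 1:] ^ CARD('a)) ^ 2 + [:b:] * [:0, 1:] ^ CARD('a) + 1 = 0] (mod [:1, b, 1:])"
proof -
  have char: "CHAR('a poly) = 2"
    using CHAR_eq_2_if_card_power_of_2[OF assms] by simp
  have frobenius: "(f + g) ^ CARD('a) = f ^ CARD('a) + g ^ CARD('a)" for f g :: "'a poly"
    using char assms by (intro freshmans_dream') simp_all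
  have "[:1, b, 1:] ^ CARD('a) = ((([:0, 1:] ^ 2 + [:b:] * [:0, 1:]) + 1) ^ CARD('a))"
    by (simp add: power2_eq_square one_pCons)
  also have "\<dots> = ([:0, 1:] ^ CARD('a)) ^ 2 + [:b ^ CARD('a):] * [:0, 1:] ^ CARD('a) + 1"
    unfolding frobenius power_mult_distrib poly_const_pow power_one
    by (simp only: mult.commute flip: power_mult)
  also have "b ^ CARD('a) = b"
    by (rule field_power_card)
  finally have "[:1, b, 1:] ^ CARD('a) = ([:0, 1:] ^ CARD('a)) ^ 2 + [:b:] * [:0, 1:] ^ CARD('a) + 1" .
  moreover have "[:1, b, 1:] dvd [:1, b, 1:] ^ CARD('a)"
    by (simp add: assms dvd_power)
  ultimately show ?thesis
    by (simp add: cong_0_iff)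
qed

lemma linear_roots_mod_quadratic:
  fixes r :: "'a::field poly"
  assumes char: "CHAR('a) = 2" and "b \<noteq> 0" and "degree r \<le> 1"
    and root: "[r ^ 2 + [:b:] * r + 1 = 0] (mod [:1, b, 1:])"
  shows "r = [:coeff r 0:] \<or> r = [:0, 1:] \<or> r = [:b, 1:]"
proof -
  define x y where "x = coeff r 0" and "y = coeff r 1"
  have r: "r = [:x, y:]"
  proof (rule poly_eqI)
    fix i
    show "coeff r i = coeff [:x, y:] i"
      using \<open>degree r \<le> 1\<close> coeff_eq_0[of r i]
      by (cases i) (auto simp: x_def y_def coeff_pCons split: nat.split)
  qed
  have two: "(2::'a) = 0"
    using two_eq_zero_if_CHAR_2[OF char] .
  have "r ^ 2 + [:b:] * r + 1 - smult (y ^ 2) [:1, b, 1:] = [:x^2 + b*x + 1 - y^2, b*y - b*y^2:]"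
    unfolding r using two by (simp add: power2_eq_square algebra_simps one_pCons)
  moreover have "[:1, b, 1:] dvd r ^ 2 + [:b:] * r + 1 - smult (y ^ 2) [:1, b, 1:]"
    using root unfolding cong_0_iff by (intro dvd_diff dvd_smult dvd_refl)
  ultimately have x: "x^2 + b*x + 1 - y^2 = 0" and y: "b * (y - y^2) = 0"
    by (simp_all only: quadratic_dvd_linear_iff right_diff_distrib)
  from y \<open>b \<noteq> 0\<close> have "y * (1 - y) = 0"
    by (simp add: power2_eq_square algebra_simps)
  hence "y = 0 \<or> y = 1"
    by simp
  moreover have "x * (x + b) = 0" if "y = 1"
    using x that by (simp add: power2_eq_square algebra_simps)
  hence "x = 0 \<or> x = b" if "y = 1"
    using that uminus_CHAR_2[OF char, of b] by (auto simp: add_eq_0_iff)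
  ultimately show ?thesis
    using r by auto
qed

lemma X_pow_card_mod_quadratic_cases:
  fixes b :: "'a::{finite,field}"
  assumes card: "CARD('a) = 2 ^ k" and "b \<noteq> 0"
  obtains x where "[[:0, 1:] ^ CARD('a) = [:x:]] (mod [:1, b, 1:])"
    | "[[:0, 1:] ^ CARD('a) = [:0, 1:]] (mod [:1, b, 1:])"
    | "[[:0, 1:] ^ CARD('a) = [:b, 1:]] (mod [:1, b, 1:])"
proof -
  define r where "r = [:0, 1:] ^ CARD('a) mod [:1, b, 1:]"
  have r: "[r = [:0, 1:] ^ CARD('a)] (mod [:1, b, 1:])"
    by (simp add: r_def)
  have "degree r \<le> 1"
    using degree_mod_less[of "[:1, b, 1:]" "[:0, 1:] ^ CARD('a)"] by (auto simp: r_def)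
  moreover have "[r ^ 2 + [:b:] * r + 1 = ([:0, 1:] ^ CARD('a)) ^ 2 + [:b:] * [:0, 1:] ^ CARD('a) + 1]
      (mod [:1, b, 1:])"
    using r by (intro cong_add cong_mult cong_pow cong_refl)
  hence "[r ^ 2 + [:b:] * r + 1 = 0] (mod [:1, b, 1:])"
    using X_pow_card_root_mod_quadratic[OF card] by (rule cong_trans)
  ultimately have "r = [:coeff r 0:] \<or> r = [:0, 1:] \<or> r = [:b, 1:]"
    using linear_roots_mod_quadratic CHAR_eq_2_if_card_power_of_2[OF card] \<open>b \<noteq> 0\<close> by blast
  thus thesis
    using cong_sym[OF r] that by metis
qed

lemma X_pow_eq_one_mod_quadratic_cases:
  fixes b :: "'a::{finite,field}"
  assumes card: "CARD('a) = 2 ^ k"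
  obtains "[[:0, 1:] ^ 2 = 1] (mod [:1, b, 1:])"
    | "[[:0, 1:] ^ (CARD('a) - 1) = 1] (mod [:1, b, 1:])"
    | "[[:0, 1:] ^ (CARD('a) * (CARD('a) - 1)) = 1] (mod [:1, b, 1:])"
    | "[[:0, 1:] ^ (CARD('a) + 1) = 1] (mod [:1, b, 1:])"
proof -
  let ?X = "[:0, 1:] :: 'a poly" and ?p = "[:1, b, 1:]" and ?q = "CARD('a)"
  have inv: "[?X * [:b, 1:] = 1] (mod ?p)"
    using X_times_inverse_mod_quadratic CHAR_eq_2_if_card_power_of_2[OF card] by blast
  have "card {0, 1 :: 'a} \<le> ?q"
    by (rule card_mono) simp_all
  hence "?q \<ge> 2"
    by simp
  show thesis
  proof (cases "b = 0")
    case True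
    thus thesis
      using inv that(1) by (simp add: power2_eq_square)
  next
    case False
    then consider x where "[?X ^ ?q = [:x:]] (mod ?p)" | "[?X ^ ?q = ?X] (mod ?p)"
      | "[?X ^ ?q = [:b, 1:]] (mod ?p)"
      using X_pow_card_mod_quadratic_cases[OF card] by metis
    thus thesis
    proof cases
      case (1 x)
      have "?q * (?q - 1) + ?q = ?q * ?q"
        using \<open>?q \<ge> 2\<close> by (simp add: algebra_simps)
      hence "[?X ^ (?q * (?q - 1) + ?q) = [:x:] ^ ?q] (mod ?p)"
        using cong_pow[OF 1, of ?q] by (simp add: power_mult)
      also have "[:x:] ^ ?q = [:x:]"
        by (simp add: poly_const_pow field_power_card)
      also have "[[:x:] = ?X ^ ?q] (mod ?p)"
        using 1 by (rule cong_sym)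
      finally show thesis
        using cong_pow_add_cancel[OF inv] that(3) by blast
    next
      case 2
      hence "[?X ^ ((?q - 1) + 1) = ?X ^ 1] (mod ?p)"
        using \<open>?q \<ge> 2\<close> by simp
      thus thesis
        using cong_pow_add_cancel[OF inv] that(2) by blast
    next
      case 3
      have "[?X ^ (?q + 1) = [:b, 1:] * ?X] (mod ?p)"
        using cong_scalar_right[OF 3, of ?X] by simp
      also have "[[:b, 1:] * ?X = 1] (mod ?p)"
        using inv by (simp add: mult.commute)
      finally show thesis
        by (rule that(4))
    qed
  qed
qed

lemma X_pow_order_mod_quadratic:
  fixes b :: "'a::{finite,field}"
  assumes card: "CARD('a) = 2 ^ k"
  shows "[[:0, 1:] ^ (CARD('a) * (CARD('a)^2 - 1)) = 1] (mod [:1, b, 1:])"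
proof -
  let ?q = "CARD('a)"
  have order: "?q * (?q^2 - 1) = ?q * (?q - 1) * (?q + 1)"
    by (simp add: power2_eq_square algebra_simps diff_mult_distrib)
  have "2 dvd ?q"
    using CHAR_dvd_CARD[where 'a = 'a] CHAR_eq_2_if_card_power_of_2[OF card] by simp
  have dvds: "2 dvd ?q * (?q^2 - 1)" "?q - 1 dvd ?q * (?q^2 - 1)"
    "?q * (?q - 1) dvd ?q * (?q^2 - 1)" "?q + 1 dvd ?q * (?q^2 - 1)"
    unfolding order using \<open>2 dvd ?q\<close> by (simp_all only: dvd_mult2 dvd_triv_left dvd_triv_right)
  show ?thesis
    by (rule X_pow_eq_one_mod_quadratic_cases[OF card, of b]) (erule cong_pow_eq_one_dvd, rule dvds)+
qed

section \<open>Continuants\<close>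

text \<open>In characteristic 2, \<open>continuant b k\<close> is the determinant of \<open>T_k(b)\<close>.\<close>

fun continuant :: "'a::comm_semiring_1 \<Rightarrow> nat \<Rightarrow> 'a" where
  "continuant b 0 = 1"
| "continuant b (Suc 0) = b"
| "continuant b (Suc (Suc k)) = b * continuant b (Suc k) + continuant b k"

lemma continuant_cassini:
  fixes b :: "'a::comm_ring_1"
  assumes "CHAR('a) = 2"
  shows "continuant b (Suc k) ^ 2 + continuant b (Suc (Suc k)) * continuant b k = 1"
proof (induction k)
  case 0
  show ?case
    using uminus_CHAR_2[OF assms, of "b * b"] by (simp add: power2_eq_square algebra_simps)
next
  case (Suc k)
  have "continuant b (Suc (Suc k)) ^ 2 + continuant b (Suc (Suc (Suc k))) * continuant b (Suc k)
      = continuant b (Suc k) ^ 2 + continuant b (Suc (Suc k)) * continuant b k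
        + 2 * (b * continuant b (Suc (Suc k)) * continuant b (Suc k))"
    by (simp add: power2_eq_square algebra_simps)
  thus ?case
    using Suc two_eq_zero_if_CHAR_2[OF assms] by simp
qed

lemma X_pow_continuant:
  fixes b :: "'a::field"
  assumes char: "CHAR('a) = 2"
  shows "[[:0, 1:] ^ (k + 2) = [:continuant b k, continuant b (Suc k):]] (mod [:1, b, 1:])"
proof (induction k)
  case 0
  have "[:0, 1:] ^ (0 + 2) - [:continuant b 0, continuant b (Suc 0):] = [:1, b, 1:]"
    using uminus_CHAR_2[OF char] two_eq_zero_if_CHAR_2[OF char] by (simp add: power2_eq_square)
  thus ?case
    unfolding cong_iff_dvd_diff by (simp only: dvd_refl)
next
  case (Suc k)
  have "[:0, 1:] ^ (Suc k + 2) = [:0, 1:] * [:0, 1:] ^ (k + 2)"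
    by simp
  also have "[\<dots> = [:0, 1:] * [:continuant b k, continuant b (Suc k):]] (mod [:1, b, 1:])"
    by (rule cong_scalar_left[OF Suc])
  also have "[:0, 1:] * [:continuant b k, continuant b (Suc k):]
      = [:continuant b (Suc k), continuant b (Suc (Suc k)):] + smult (continuant b (Suc k)) [:1, b, 1:]"
    using uminus_CHAR_2[OF char] two_eq_zero_if_CHAR_2[OF char] by simp
  also have "[\<dots> = [:continuant b (Suc k), continuant b (Suc (Suc k)):]] (mod [:1, b, 1:])"
    unfolding cong_iff_dvd_diff add_diff_cancel_left' by (intro dvd_smult dvd_refl)
  finally show ?case .
qed

lemma X_not_cong_one_mod_quadratic:
  fixes b c :: "'a::field"
  shows "\<not> [[:0, 1:] = 1] (mod [:c, b, 1:])"
proof -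
  have "[:0, 1:] - 1 = [:- 1, 1::'a:]"
    by (simp add: one_pCons)
  thus ?thesis
    by (simp add: cong_iff_dvd_diff quadratic_dvd_linear_iff)
qed

lemma continuant_nonzero:
  fixes b :: "'a::{finite,field}"
  assumes card: "CARD('a) = 2 ^ k" and coprime: "coprime (n + 1) (CARD('a) * (CARD('a)^2 - 1))"
  shows "continuant b n \<noteq> 0"
proof
  assume zero: "continuant b n = 0"
  have char: "CHAR('a) = 2"
    by (rule CHAR_eq_2_if_card_power_of_2[OF card])
  obtain m where n: "n = Suc m"
    using zero by (cases n) auto
  have "continuant b m ^ 2 = 1"
    using continuant_cassini[OF char, of b m] zero n by (simp add: power2_eq_square)
  moreover have "(continuant b m + 1) ^ 2 = continuant b m ^ 2 + 1 ^ 2"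
    using char by (intro freshmans_dream) simp_all
  ultimately have "continuant b m + 1 = 0"
    using two_eq_zero_if_CHAR_2[OF char] by simp
  hence "continuant b m = 1"
    using uminus_CHAR_2[OF char, of 1] by (simp flip: eq_neg_iff_add_eq_0)
  hence "[[:0, 1:] ^ (n + 1) = 1] (mod [:1, b, 1:])"
    using X_pow_continuant[OF char, of m b] zero n by (simp add: one_pCons)
  hence "[[:0, 1:] = 1] (mod [:1, b, 1:])"
    using X_pow_order_mod_quadratic[OF card] coprime by (rule cong_one_if_coprime_exponents)
  thus False
    using X_not_cong_one_mod_quadratic by blast
qed

section \<open>The tridiagonal Toeplitz operator\<close>

definition tridiag_mult :: "nat \<Rightarrow> 'a::comm_ring_1 \<Rightarrow> (nat \<Rightarrow> 'a) \<Rightarrow> nat \<Rightarrow> 'a" where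
  "tridiag_mult n b w m = (if m < n then (\<Sum>k<n. tridiag_toeplitz n b m k * w k) else 0)"

lemma tridiag_toeplitz_sym: "tridiag_toeplitz n b i j = tridiag_toeplitz n b j i"
  unfolding tridiag_toeplitz_def by auto

lemma tridiag_mult_in_vecs: "tridiag_mult n b w \<in> vecs n"
  by (simp add: vecs_def tridiag_mult_def)

lemma tridiag_mult_add:
  "tridiag_mult n b (\<lambda>k. v k + w k) = (\<lambda>m. tridiag_mult n b v m + tridiag_mult n b w m)"
  by (simp add: tridiag_mult_def fun_eq_iff distrib_left sum.distrib)

lemma tridiag_mult_plus_one:
  assumes "w \<in> vecs n"
  shows "tridiag_mult n (b + 1) w = (\<lambda>m. tridiag_mult n b w m + w m)"
proof
  fix m
  have "(\<Sum>k<n. tridiag_toeplitz n (b + 1) m k * w k)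
      = (\<Sum>k<n. tridiag_toeplitz n b m k * w k) + (\<Sum>k<n. if k = m then w k else 0)"
    if "m < n"
    unfolding sum.distrib[symmetric]
    by (rule sum.cong) (auto simp: tridiag_toeplitz_def that algebra_simps)
  thus "tridiag_mult n (b + 1) w m = tridiag_mult n b w m + w m"
    using assms by (simp add: tridiag_mult_def sum.delta vecs_def)
qed

lemma tridiag_mult_three_term:
  assumes w: "w \<in> vecs n" and m: "m < n"
  shows "tridiag_mult n b w m = (if m = 0 then 0 else w (m - 1)) + b * w m + w (Suc m)"
proof -
  have "(\<Sum>k<n. tridiag_toeplitz n b m k * w k)
      = (\<Sum>k<n. if Suc k = m then w k else 0) + (\<Sum>k<n. if k = m then b * w k else 0)
        + (\<Sum>k<n. if k = Suc m then w k else 0)"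
    unfolding sum.distrib[symmetric]
    by (rule sum.cong) (auto simp: tridiag_toeplitz_def m)
  also have "(\<Sum>k<n. if Suc k = m then w k else 0) = (if m = 0 then 0 else w (m - 1))"
    using m by (cases m) (simp_all add: sum.delta)
  also have "(\<Sum>k<n. if k = Suc m then w k else 0) = w (Suc m)"
    using w by (simp add: sum.delta vecs_def)
  finally show ?thesis
    using m by (simp add: tridiag_mult_def sum.delta)
qed

lemma tridiag_mult_sym:
  "(\<Sum>k<n. tridiag_mult n b v k * w k) = (\<Sum>k<n. v k * tridiag_mult n b w k)"
proof -
  have "(\<Sum>k<n. tridiag_mult n b v k * w k) = (\<Sum>k<n. \<Sum>i<n. tridiag_toeplitz n b k i * v i * w k)"
    by (simp add: tridiag_mult_def sum_distrib_right)
  also have "\<dots> = (\<Sum>i<n. \<Sum>k<n. v i * (tridiag_toeplitz n b i k * w k))"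
    by (subst sum.swap) (simp add: tridiag_toeplitz_sym mult_ac)
  also have "\<dots> = (\<Sum>i<n. v i * tridiag_mult n b w i)"
    by (simp add: tridiag_mult_def sum_distrib_left)
  finally show ?thesis .
qed

lemma tridiag_kernel_continuant:
  fixes w :: "nat \<Rightarrow> 'a::comm_ring_1"
  assumes char: "CHAR('a) = 2" and w: "w \<in> vecs n" and ker: "tridiag_mult n b w = (\<lambda>_. 0)"
  shows "Suc k \<le> n \<Longrightarrow> w k = w 0 * continuant b k \<and> w (Suc k) = w 0 * continuant b (Suc k)"
proof (induction k)
  case 0
  have "0 + b * w 0 + w (Suc 0) = 0"
    using tridiag_mult_three_term[OF w, of 0 b] ker 0 by simp
  thus ?case
    using uminus_CHAR_2[OF char] by (simp add: mult.commute flip: eq_neg_iff_add_eq_0)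
next
  case (Suc k)
  hence "w (Suc k - 1) + b * w (Suc k) + w (Suc (Suc k)) = 0"
    using tridiag_mult_three_term[OF w, of "Suc k" b] ker by simp
  hence "w (Suc (Suc k)) = b * w (Suc k) + w k"
    using uminus_CHAR_2[OF char] by (simp add: add.commute flip: eq_neg_iff_add_eq_0)
  thus ?case
    using Suc by (simp add: algebra_simps)
qed

lemma tridiag_mult_eq_0_imp:
  fixes w :: "nat \<Rightarrow> 'a::field"
  assumes "CHAR('a) = 2" and w: "w \<in> vecs n" and "tridiag_mult n b w = (\<lambda>_. 0)"
    and "continuant b n \<noteq> 0"
  shows "w = (\<lambda>_. 0)"
proof (cases n)
  case (Suc m)
  have "w 0 * continuant b n = 0"
    using tridiag_kernel_continuant[OF assms(1-3), of m] w Suc by (simp add: vecs_def)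
  hence "w 0 = 0"
    using assms(4) by simp
  show ?thesis
  proof
    fix k
    show "w k = 0"
    proof (cases "k < n")
      case True
      thus ?thesis
        using tridiag_kernel_continuant[OF assms(1-3), of k] \<open>w 0 = 0\<close> by simp
    qed (use w in \<open>simp add: vecs_def\<close>)
  qed
qed (use w in \<open>auto simp: vecs_def\<close>)

section \<open>The code \<open>C_n(a)\<close>\<close>

definition codeword :: "nat \<Rightarrow> 'a::comm_ring_1 \<Rightarrow> (nat \<Rightarrow> 'a) \<Rightarrow> nat \<Rightarrow> 'a" where
  "codeword n a u j = (if j < n then u j else if j < 2 * n then tridiag_mult n a u (j - n) else 0)"

lemma C_code_eq_image: "C_code n a = codeword n a ` vecs n"
proof -
  have "(\<lambda>j. if j < 2 * n then \<Sum>i<n. u i * gen_matrix n a i j else 0) = codeword n a u"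
    if u: "u \<in> vecs n" for u :: "nat \<Rightarrow> 'a"
  proof
    fix j
    have "(\<Sum>i<n. u i * gen_matrix n a i j) = (\<Sum>i<n. if i = j then u i else 0)" if "j < n"
      by (rule sum.cong) (simp_all add: gen_matrix_def that)
    hence "(\<Sum>i<n. u i * gen_matrix n a i j) = u j" if "j < n"
      using that by simp
    moreover have "(\<Sum>i<n. u i * gen_matrix n a i j) = tridiag_mult n a u (j - n)"
      if "n \<le> j" "j < 2 * n"
      using that by (simp add: gen_matrix_def tridiag_mult_def tridiag_toeplitz_sym mult.commute)
    ultimately show "(if j < 2 * n then \<Sum>i<n. u i * gen_matrix n a i j else 0) = codeword n a u j"
      by (simp add: codeword_def)
  qed
  thus ?thesis
    unfolding C_code_def lin_code_def Setcompr_eq_image by (rule image_cong[OF refl])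
qed

lemma sum_lessThan_add: "(\<Sum>j<(n::nat) + m. f j) = (\<Sum>j<n. f j) + (\<Sum>k<m. f (n + k))"
  by (induction m) (simp_all add: algebra_simps)

lemma inner_codeword:
  "(\<Sum>j<2 * n. codeword n a w j * codeword n a u j)
    = (\<Sum>k<n. w k * (u k + tridiag_mult n a (tridiag_mult n a u) k))"
proof -
  have "(\<Sum>j<2 * n. codeword n a w j * codeword n a u j)
      = (\<Sum>k<n. w k * u k) + (\<Sum>k<n. tridiag_mult n a w k * tridiag_mult n a u k)"
    by (simp add: mult_2 sum_lessThan_add codeword_def)
  also have "\<dots> = (\<Sum>k<n. w k * (u k + tridiag_mult n a (tridiag_mult n a u) k))"
    by (simp add: tridiag_mult_sym distrib_left sum.distrib)
  finally show ?thesis .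
qed

lemma codeword_zero: "codeword n a (\<lambda>_. 0) = (\<lambda>_. 0)"
  by (simp add: codeword_def tridiag_mult_def fun_eq_iff)

lemma tridiag_mult_plus_one_square:
  fixes u :: "nat \<Rightarrow> 'a::comm_ring_1"
  assumes char: "CHAR('a) = 2" and u: "u \<in> vecs n"
  shows "tridiag_mult n (b + 1) (tridiag_mult n (b + 1) u)
    = (\<lambda>m. u m + tridiag_mult n b (tridiag_mult n b u) m)"
proof -
  have "tridiag_mult n (b + 1) (tridiag_mult n (b + 1) u)
      = (\<lambda>m. tridiag_mult n b (tridiag_mult n (b + 1) u) m + tridiag_mult n (b + 1) u m)"
    by (rule tridiag_mult_plus_one[OF tridiag_mult_in_vecs])
  also have "\<dots> = (\<lambda>m. u m + tridiag_mult n b (tridiag_mult n b u) m + 2 * tridiag_mult n b u m)"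
    unfolding tridiag_mult_plus_one[OF u] tridiag_mult_add by (simp add: algebra_simps)
  finally show ?thesis
    using two_eq_zero_if_CHAR_2[OF char] by simp
qed

lemma dual_codeword_imp:
  assumes "codeword n a u \<in> dual_code (2 * n) (C_code n a)" and "m < n"
  shows "u m + tridiag_mult n a (tridiag_mult n a u) m = 0"
proof -
  have "(\<lambda>k. of_bool (k = m)) \<in> vecs n"
    using assms(2) by (simp add: vecs_def)
  hence "(\<Sum>j<2 * n. codeword n a (\<lambda>k. of_bool (k = m)) j * codeword n a u j) = 0"
    using assms(1) by (auto simp: dual_code_def C_code_eq_image)
  hence "(\<Sum>k\<in>{..<n} \<inter> {m}. u k + tridiag_mult n a (tridiag_mult n a u) k) = 0"
    by (simp add: inner_codeword)
  moreover have "{..<n} \<inter> {m} = {m}"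
    using assms(2) by auto
  ultimately show ?thesis
    by simp
qed

lemma C_code_LCD_if_continuant_nonzero:
  fixes a :: "'a::field"
  assumes char: "CHAR('a) = 2" and nonsing: "continuant (a + 1) n \<noteq> 0"
  shows "is_LCD (2 * n) (C_code n a)"
  unfolding is_LCD_def
proof (intro equalityI subsetI)
  fix c
  assume "c \<in> C_code n a \<inter> dual_code (2 * n) (C_code n a)"
  then obtain u where u: "u \<in> vecs n" and c: "c = codeword n a u"
    and dual: "codeword n a u \<in> dual_code (2 * n) (C_code n a)"
    by (auto simp: C_code_eq_image)
  have "tridiag_mult n (a + 1) (tridiag_mult n (a + 1) u) = (\<lambda>_. 0)"
    using dual_codeword_imp[OF dual] u
    by (auto simp: tridiag_mult_plus_one_square[OF char u] vecs_def tridiag_mult_def)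
  hence "tridiag_mult n (a + 1) u = (\<lambda>_. 0)"
    by (rule tridiag_mult_eq_0_imp[OF char tridiag_mult_in_vecs _ nonsing])
  hence "u = (\<lambda>_. 0)"
    by (rule tridiag_mult_eq_0_imp[OF char u _ nonsing])
  thus "c \<in> {\<lambda>_. 0}"
    by (simp add: c codeword_zero)
next
  fix c :: "nat \<Rightarrow> 'a"
  assume "c \<in> {\<lambda>_. 0}"
  moreover have "(\<lambda>_. 0) \<in> C_code n a"
    using codeword_zero[of n a] by (auto simp: C_code_eq_image vecs_def intro: image_eqI[where x = "\<lambda>_. 0"])
  ultimately show "c \<in> C_code n a \<inter> dual_code (2 * n) (C_code n a)"
    by (simp add: dual_code_def vecs_def)
qed

theorem corollary2p3:
  fixes a :: "'a::{finite,field}" and n :: nat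
  assumes "\<exists>k. card (UNIV :: 'a set) = 2 ^ k"
    and "n \<ge> 1"
    and "gcd (n + 1) (card (UNIV :: 'a set) * (card (UNIV :: 'a set) ^ 2 - 1)) = 1"
  shows "is_LCD (2 * n) (C_code n a)"
proof -
  obtain k where card: "CARD('a) = 2 ^ k"
    using assms(1) by blast
  have "coprime (n + 1) (CARD('a) * (CARD('a) ^ 2 - 1))"
    unfolding coprime_iff_gcd_eq_1 by (rule assms(3))
  hence "continuant (a + 1) n \<noteq> 0"
    by (rule continuant_nonzero[OF card])
  thus ?thesis
    by (rule C_code_LCD_if_continuant_nonzero[OF CHAR_eq_2_if_card_power_of_2[OF card]])
qed

end
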